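(* Let $T$ be a $3$-CET with exactly one flip, with domain $S^1\setminus\{a_0,a_1,a_2\}$ where $0=a_0<a_1<a_2<a_3=1$ and $I_i=(a_{i-1},a_i)$, $i=1,2,3$, such that $I_1$ is the flip of $T$ and $T(I_1)<T(I_3)<T(I_2)$ in the cyclic order. Assume $T$ has no periodic points. Let $N\ge2$ be the least positive integer with $T^N(I_1)\cap I_1\neq\emptyset$ (so that $T^n(I_1)$, $0\le n\le N-1$, are pairwise disjoint). Assume that $a_2\in T^{n_0}(I_1)$ for some $1\le n_0\le N-1$, let $d\in I_1$ be such that $T^{n_0}(d)=a_2$, and write $I_1\setminus\{d\}=I_\ell\cup I_r$ with $I_\ell=(a_0,d)$ and $I_r=(d,a_1)$ (so $I_\ell<I_r$ in $S^1\setminus\{a_2\}$). Then either $a_0\in T^N(I_\ell)$ or $a_1\in T^N(I_r)$.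
   Context: $S^1=[0,1]/(0\sim1)$ with orientation induced by $[0,1]$ and points written as points of $[0,1]$. A $3$-CET is an injective map $T:I_1\cup I_2\cup I_3\to S^1$, where $I_1,I_2,I_3$ are pairwise disjoint open subintervals whose closures cover $S^1$, which is an isometry on each $I_i$ and cannot be continuously extended to a larger open set. A flip is an $I_i$ on which $T$ reverses orientation. For a set $J$, $T^n(J)=\{T^n(x): x\in J\cap\mathrm{Dom}(T^n)\}$. For subintervals $J_1,J_2,J_3$ of $S^1$, $J_1<J_2<J_3$ means every triple in $J_1\times J_2\times J_3$ is cyclically ordered; for subintervals of $S^1\setminus\{p\}$, $J_1<J_2$ refers to the linear order on $S^1\setminus\{p\}$ induced by the cyclic order. A periodic point is $p$ with $T^m(p)=p$ for some $m\ge1$. *)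

theory Defs
  imports Complex_Main
begin

text \<open>The circle S^1 = [0,1]/(0~1) is represented by real numbers in [0,1);
  a real number x stands for the point frac x.\<close>

definition cdist :: "real \<Rightarrow> real \<Rightarrow> real" where
  "cdist x y = min (frac (x - y)) (frac (y - x))"

definition cyc :: "real \<Rightarrow> real \<Rightarrow> real \<Rightarrow> bool" where
  "cyc x y z \<longleftrightarrow> (x < y \<and> y < z) \<or> (y < z \<and> z < x) \<or> (z < x \<and> x < y)"

definition cyc_sets :: "real set \<Rightarrow> real set \<Rightarrow> real set \<Rightarrow> bool" where
  "cyc_sets A B C \<longleftrightarrow> (\<forall>x\<in>A. \<forall>y\<in>B. \<forall>z\<in>C. cyc x y z)"

definition circ_isometry_on :: "(real \<Rightarrow> real) \<Rightarrow> real set \<Rightarrow> bool" where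
  "circ_isometry_on T I \<longleftrightarrow>
     (\<exists>c. (\<forall>x\<in>I. T x = frac (x + c)) \<or> (\<forall>x\<in>I. T x = frac (c - x)))"

definition flip_on :: "(real \<Rightarrow> real) \<Rightarrow> real set \<Rightarrow> bool" where
  "flip_on T I \<longleftrightarrow> (\<exists>c. \<forall>x\<in>I. T x = frac (c - x))"

definition no_cont_ext_at :: "real set \<Rightarrow> (real \<Rightarrow> real) \<Rightarrow> real \<Rightarrow> bool" where
  "no_cont_ext_at D T a \<longleftrightarrow>
     \<not> (\<exists>p. \<forall>e>0. \<exists>\<delta>>0. \<forall>x\<in>D. cdist x a < \<delta> \<longrightarrow> cdist (T x) p < e)"

definition cet_dom :: "real \<Rightarrow> real \<Rightarrow> real set" where
  "cet_dom a1 a2 = {0<..<1} - {a1, a2}"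

definition CET3 :: "real \<Rightarrow> real \<Rightarrow> (real \<Rightarrow> real) \<Rightarrow> bool" where
  "CET3 a1 a2 T \<longleftrightarrow>
     0 < a1 \<and> a1 < a2 \<and> a2 < 1 \<and>
     inj_on T (cet_dom a1 a2) \<and>
     circ_isometry_on T {0<..<a1} \<and> circ_isometry_on T {a1<..<a2} \<and>
     circ_isometry_on T {a2<..<1} \<and>
     no_cont_ext_at (cet_dom a1 a2) T 0 \<and> no_cont_ext_at (cet_dom a1 a2) T a1 \<and>
     no_cont_ext_at (cet_dom a1 a2) T a2"

definition iter_dom :: "real set \<Rightarrow> (real \<Rightarrow> real) \<Rightarrow> nat \<Rightarrow> real set" where
  "iter_dom D T n = {x. \<forall>k<n. (T ^^ k) x \<in> D}"

definition iter_img :: "real set \<Rightarrow> (real \<Rightarrow> real) \<Rightarrow> nat \<Rightarrow> real set \<Rightarrow> real set" where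
  "iter_img D T n J = (T ^^ n) ` (J \<inter> iter_dom D T n)"

definition has_periodic_point :: "real set \<Rightarrow> (real \<Rightarrow> real) \<Rightarrow> bool" where
  "has_periodic_point D T \<longleftrightarrow> (\<exists>p m. m \<ge> 1 \<and> p \<in> iter_dom D T m \<and> (T ^^ m) p = p)"

end

theory Submission
  imports Defs
begin

text \<open>
  The cyclic order of the three image intervals forces them to be laid end to end, so \<open>T\<close>
  is \<open>x \<mapsto> c - x\<close> on \<open>I1\<close> and a translation on \<open>I2\<close> and on \<open>I3\<close>. Before the
  first return time \<open>N\<close> an image arc of a piece of \<open>I1\<close> avoids \<open>I1\<close>, and it meets \<open>a2\<close>
  only at time \<open>n0\<close>, where \<open>I1\<close> is cut at \<open>d\<close>; away from the endpoints of \<open>I1\<close> and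
  from \<open>a2\<close> the map is a translation, so such arcs are moved rigidly.
  After one more step the arc \<open>T\<^bsup>n0+1\<^esup>(I\<^sub>l)\<close> sits right next to \<open>T(I\<^sub>l)\<close>, so
  \<open>T\<^bsup>N-n0\<^esup>(I\<^sub>l)\<close> and \<open>T\<^bsup>N\<^esup>(I\<^sub>l)\<close> are adjacent arcs sharing an endpoint \<open>u\<close>.
  If \<open>u \<in> I1\<close> the first arc returns to \<open>I1\<close> too early, if \<open>u = 0\<close> then \<open>T\<^bsup>N\<^esup>\<close>
  fixes a point of \<open>I\<^sub>l\<close>, and otherwise the second arc can only reach \<open>I1\<close> by running
  across \<open>0\<close>. The same argument applies to \<open>I\<^sub>r\<close> with \<open>a1\<close> in place of \<open>0\<close>.
\<close>

lemma iter_dom_Suc: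
  "x \<in> iter_dom D T (Suc k) \<longleftrightarrow> x \<in> iter_dom D T k \<and> (T ^^ k) x \<in> D"
  unfolding iter_dom_def using less_Suc_eq by auto

lemma iter_dom_mono: "k \<le> m \<Longrightarrow> x \<in> iter_dom D T m \<Longrightarrow> x \<in> iter_dom D T k"
  unfolding iter_dom_def by auto

lemma funpow_in_iter_dom: "x \<in> iter_dom D T (k + m) \<Longrightarrow> (T ^^ k) x \<in> iter_dom D T m"
proof -
  assume x: "x \<in> iter_dom D T (k + m)"
  have "(T ^^ j) ((T ^^ k) x) \<in> D" if "j < m" for j
  proof -
    have "(T ^^ (j + k)) x \<in> D"
      using x that unfolding iter_dom_def by simp
    then show ?thesis
      by (simp add: funpow_add)
  qed
  then show ?thesis
    unfolding iter_dom_def by simp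
qed

lemma inj_on_funpow_iter_dom:
  assumes "inj_on T D"
  shows "inj_on (T ^^ k) (iter_dom D T k)"
proof (induction k)
  case 0
  then show ?case by simp
next
  case (Suc k)
  show ?case
  proof (rule inj_onI)
    fix x y
    assume "x \<in> iter_dom D T (Suc k)" "y \<in> iter_dom D T (Suc k)"
      and "(T ^^ Suc k) x = (T ^^ Suc k) y"
    then have "x \<in> iter_dom D T k" "y \<in> iter_dom D T k" "(T ^^ k) x = (T ^^ k) y"
      using assms by (auto simp: iter_dom_Suc dest: inj_onD)
    then show "x = y"
      using Suc.IH by (meson inj_onD)
  qed
qed

lemma frac_affine_on_interval:
  fixes e lo hi :: real
  assumes nonzero: "\<And>w. lo < w \<Longrightarrow> w < hi \<Longrightarrow> frac (e + w) \<noteq> 0"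
  obtains n :: int where "\<And>w. lo < w \<Longrightarrow> w < hi \<Longrightarrow> frac (e + w) = e + w - of_int n"
proof -
  have floor_eq: "\<lfloor>e + p\<rfloor> = \<lfloor>e + q\<rfloor>" if "lo < p" "p \<le> q" "q < hi" for p q
  proof (rule ccontr)
    assume "\<lfloor>e + p\<rfloor> \<noteq> \<lfloor>e + q\<rfloor>"
    moreover have "\<lfloor>e + p\<rfloor> \<le> \<lfloor>e + q\<rfloor>"
      using that by (intro floor_mono) simp
    ultimately have "e + p < of_int \<lfloor>e + q\<rfloor>"
      by linarith
    moreover have "frac (e + (of_int \<lfloor>e + q\<rfloor> - e)) = 0"
      by simp
    ultimately show False
      using nonzero[of "of_int \<lfloor>e + q\<rfloor> - e"] that by linarith
  qed
  show thesis
  proof (cases "lo < hi")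
    case True
    show thesis
    proof (rule that[of "\<lfloor>e + (lo + hi) / 2\<rfloor>"])
      fix w
      assume "lo < w" "w < hi"
      moreover have "lo < (lo + hi) / 2" "(lo + hi) / 2 < hi"
        using True by auto
      ultimately have "\<lfloor>e + w\<rfloor> = \<lfloor>e + (lo + hi) / 2\<rfloor>"
        using floor_eq[of w "(lo + hi) / 2"] floor_eq[of "(lo + hi) / 2" w]
        by (metis linorder_le_cases)
      then show "frac (e + w) = e + w - of_int \<lfloor>e + (lo + hi) / 2\<rfloor>"
        by (simp add: frac_def)
    qed
  next
    case False
    then show thesis
      using that[of 0] by simp
  qed
qed

lemma frac_of_neg1_to_1:
  fixes r :: real
  shows "-1 < r \<Longrightarrow> r < 1 \<Longrightarrow> frac r = (if r \<ge> 0 then r else r + 1)"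
  by (auto simp: frac_unique_iff)

lemma cyc_iff_frac:
  assumes "0 \<le> x" "x < 1" "0 \<le> y" "y < 1" "0 \<le> z" "z < 1"
  shows "cyc x y z \<longleftrightarrow> 0 < frac (y - x) \<and> frac (y - x) < frac (z - x)"
  using assms by (auto simp: cyc_def frac_of_neg1_to_1)

lemma split_positive_sum:
  fixes A B r :: real
  assumes "0 < A" "0 < B" "0 < r" "r < A + B"
  obtains u v where "0 < u" "u < A" "0 < v" "v < B" "u + v = r"
proof
  have "r / (A + B) < 1"
    using assms by simp
  then show "r * A / (A + B) < A" "r * B / (A + B) < B"
    using assms by (simp_all add: mult.commute mult_imp_div_pos_less)
  show "0 < r * A / (A + B)" "0 < r * B / (A + B)"
    using assms by simp_all
  show "r * A / (A + B) + r * B / (A + B) = r"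
    using assms by (simp add: add_divide_distrib[symmetric] distrib_left[symmetric])
qed

text \<open>Here \<open>frac (b + v + u)\<close> and \<open>frac (g + w + u)\<close> are the positions of \<open>T(I3)\<close> and
  \<open>T(I2)\<close> seen from a point of the flipped image \<open>T(I1)\<close>, with \<open>b\<close>, \<open>g\<close> their offsets.\<close>

lemma cyclic_arcs_adjacent:
  fixes A1 L2 L3 b g :: real
  assumes lengths: "0 < A1" "0 < L2" "0 < L3" "A1 + L2 + L3 = 1"
    and offsets: "0 \<le> b" "b < 1" "0 \<le> g" "g < 1"
    and order: "\<And>u v w. 0 < u \<Longrightarrow> u < A1 \<Longrightarrow> 0 < v \<Longrightarrow> v < L3 \<Longrightarrow> 0 < w \<Longrightarrow> w < L2 \<Longrightarrow>
            0 < frac (b + v + u) \<and> frac (b + v + u) < frac (g + w + u)"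
  shows "b = 0 \<and> g = L3"
proof -
  have b_le: "b \<le> L2"
  proof (rule ccontr)
    assume "\<not> b \<le> L2"
    then obtain u v where "0 < u" "u < A1" "0 < v" "v < L3" "u + v = 1 - b"
      using lengths offsets split_positive_sum[of A1 L3 "1 - b"] by auto
    moreover have "b + v + u = 1"
      using \<open>u + v = 1 - b\<close> by simp
    ultimately show False
      using order[of u v "L2 / 2"] lengths by simp
  qed
  have g_le: "g \<le> L3"
  proof (rule ccontr)
    assume "\<not> g \<le> L3"
    then obtain u w where "0 < u" "u < A1" "0 < w" "w < L2" "u + w = 1 - g"
      using lengths offsets split_positive_sum[of A1 L2 "1 - g"] by auto
    moreover have "g + w + u = 1"
      using \<open>u + w = 1 - g\<close> by simp
    ultimately show False
      using order[of u "L3 / 2" w] lengths frac_ge_0[of "b + L3 / 2 + u"] by simp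
  qed
  have "b + L3 \<le> g"
  proof (rule ccontr)
    assume "\<not> b + L3 \<le> g"
    define e where "e = min (b + L3 - g) (min L3 L2) / 2"
    have e: "0 < e" "e < L3" "e < L2" "2 * e \<le> b + L3 - g"
      unfolding e_def using lengths \<open>\<not> b + L3 \<le> g\<close> by auto
    have "frac (b + (L3 - e) + A1 / 2) = b + (L3 - e) + A1 / 2"
      using e lengths offsets b_le by (intro frac_eq_id) auto
    moreover have "frac (g + e + A1 / 2) = g + e + A1 / 2"
      using e lengths offsets g_le by (intro frac_eq_id) auto
    ultimately show False
      using order[of "A1 / 2" "L3 - e" e] e lengths by simp
  qed
  then show ?thesis
    using g_le offsets by auto
qed

lemma frac_diff_frac: "frac (frac x - frac y) = frac (x - y)"
  by (metis frac_diff_simp frac_add_simps(1) diff_conv_add_uminus)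

lemma cyclic_order_offsets_Ints:
  assumes a: "0 < a1" "a1 < a2" "a2 < 1"
    and T1: "\<forall>x\<in>{0<..<a1}. T x = frac (c1 - x)"
    and T2: "\<forall>x\<in>{a1<..<a2}. T x = frac (x + c2)"
    and T3: "\<forall>x\<in>{a2<..<1}. T x = frac (x + c3)"
    and order: "cyc_sets (T ` {0<..<a1}) (T ` {a2<..<1}) (T ` {a1<..<a2})"
  shows "c3 - c1 + a2 \<in> \<int>" "c2 - c1 + a1 + a2 \<in> \<int>"
proof -
  define b where "b = frac (c3 - c1 + a2)"
  define g where "g = frac (c2 - c1 + a1)"
  have "0 < frac (b + v + u) \<and> frac (b + v + u) < frac (g + w + u)"
    if "0 < u" "u < a1" "0 < v" "v < 1 - a2" "0 < w" "w < a2 - a1" for u v w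
  proof -
    have "cyc (T u) (T (v + a2)) (T (w + a1))"
      using order that unfolding cyc_sets_def by auto
    moreover have "T u = frac (c1 - u)" "T (v + a2) = frac (v + a2 + c3)"
      "T (w + a1) = frac (w + a1 + c2)"
      using T1 T2 T3 that by auto
    ultimately have "0 < frac (frac (v + a2 + c3) - frac (c1 - u)) \<and>
        frac (frac (v + a2 + c3) - frac (c1 - u)) < frac (frac (w + a1 + c2) - frac (c1 - u))"
      using cyc_iff_frac frac_lt_1 frac_ge_0 by metis
    moreover have "frac (b + v + u) = frac (v + a2 + c3 - (c1 - u))"
      "frac (g + w + u) = frac (w + a1 + c2 - (c1 - u))"
      unfolding b_def g_def by (simp_all only: add.assoc frac_add_simps(1)) (simp_all add: algebra_simps)
    ultimately show ?thesis
      by (simp only: frac_diff_frac)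
  qed
  then have "b = 0 \<and> g = 1 - a2"
    using cyclic_arcs_adjacent[of a1 "a2 - a1" "1 - a2" b g] a frac_lt_1
    unfolding b_def g_def by auto
  then have "c3 - c1 + a2 \<in> \<int>" and "(c2 - c1 + a1) - (1 - a2) \<in> \<int>"
    unfolding b_def g_def by (auto simp: frac_unique_iff)
  moreover from this(2) have "(c2 - c1 + a1) - (1 - a2) + 1 \<in> \<int>"
    by (intro Ints_add) auto
  ultimately show "c3 - c1 + a2 \<in> \<int>" "c2 - c1 + a1 + a2 \<in> \<int>"
    by (simp_all add: algebra_simps)
qed

lemma one_flip_normal_form:
  assumes cet: "CET3 a1 a2 T"
    and flip1: "flip_on T {0<..<a1}"
    and noflip2: "\<not> flip_on T {a1<..<a2}"
    and noflip3: "\<not> flip_on T {a2<..<1}"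
    and order: "cyc_sets (T ` {0<..<a1}) (T ` {a2<..<1}) (T ` {a1<..<a2})"
  obtains c where "\<And>x. 0 < x \<Longrightarrow> x < a1 \<Longrightarrow> T x = frac (c - x)"
    "\<And>x. a1 < x \<Longrightarrow> x < a2 \<Longrightarrow> T x = frac (x + c - a1 - a2)"
    "\<And>x. a2 < x \<Longrightarrow> x < 1 \<Longrightarrow> T x = frac (x + c - a2)"
proof -
  have a: "0 < a1" "a1 < a2" "a2 < 1"
    using cet unfolding CET3_def by auto
  obtain c1 where T1: "\<forall>x\<in>{0<..<a1}. T x = frac (c1 - x)"
    using flip1 unfolding flip_on_def by auto
  obtain c2 where T2: "\<forall>x\<in>{a1<..<a2}. T x = frac (x + c2)"
    using cet noflip2 unfolding CET3_def circ_isometry_on_def flip_on_def by auto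
  obtain c3 where T3: "\<forall>x\<in>{a2<..<1}. T x = frac (x + c3)"
    using cet noflip3 unfolding CET3_def circ_isometry_on_def flip_on_def by auto
  note offsets = cyclic_order_offsets_Ints[OF a T1 T2 T3 order]
  show thesis
  proof (rule that[of c1])
    fix x
    assume "a1 < x" "x < a2"
    then have "T x = frac ((x + c1 - a1 - a2) + (c2 - c1 + a1 + a2))"
      using T2 by (simp add: algebra_simps)
    then show "T x = frac (x + c1 - a1 - a2)"
      using offsets(2) frac_add_int_right by metis
  next
    fix x
    assume "a2 < x" "x < 1"
    then have "T x = frac ((x + c1 - a2) + (c3 - c1 + a2))"
      using T3 by (simp add: algebra_simps)
    then show "T x = frac (x + c1 - a2)"
      using offsets(1) frac_add_int_right by metis
  qed (use T1 in auto)
qed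

locale one_flip_cet3 =
  fixes a1 a2 c :: real and T :: "real \<Rightarrow> real"
  assumes a1_pos: "0 < a1" and a1_less_a2: "a1 < a2" and a2_less_1: "a2 < 1"
    and T_I1: "\<And>x. 0 < x \<Longrightarrow> x < a1 \<Longrightarrow> T x = frac (c - x)"
    and T_I2: "\<And>x. a1 < x \<Longrightarrow> x < a2 \<Longrightarrow> T x = frac (x + c - a1 - a2)"
    and T_I3: "\<And>x. a2 < x \<Longrightarrow> x < 1 \<Longrightarrow> T x = frac (x + c - a2)"
begin

abbreviation Dom :: "real set" where
  "Dom \<equiv> cet_dom a1 a2"

lemma mem_Dom: "x \<in> Dom \<longleftrightarrow> 0 < x \<and> x < 1 \<and> x \<noteq> a1 \<and> x \<noteq> a2"
  by (auto simp: cet_dom_def)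

lemma T_frac_I2:
  assumes "a1 < frac y" "frac y < a2"
  shows "T (frac y) = frac (y + (c - a1 - a2))"
proof -
  have "T (frac y) = frac (frac y + (c - a1 - a2))"
    using T_I2[OF assms] by (simp add: algebra_simps)
  then show ?thesis
    by simp
qed

lemma T_frac_I3:
  assumes "a2 < frac y"
  shows "T (frac y) = frac (y + (c - a2))"
proof -
  have "T (frac y) = frac (frac y + (c - a2))"
    using T_I3[OF assms frac_lt_1] by (simp add: algebra_simps)
  then show ?thesis
    by simp
qed

lemma arc_avoiding_I1:
  assumes avoid: "\<And>w. lo < w \<Longrightarrow> w < hi \<Longrightarrow> frac (e + w) \<notin> {0<..<a1}"
  obtains n :: int where
    "\<And>w. lo < w \<Longrightarrow> w < hi \<Longrightarrow> a1 < frac (e + w) \<and> frac (e + w) = e + w - of_int n"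
proof -
  have nonzero: "frac (e + w) \<noteq> 0" if w: "lo < w" "w < hi" for w
  proof
    assume zero: "frac (e + w) = 0"
    define x where "x = min (hi - w) a1 / 2"
    have x: "0 < x" "x < hi - w" "x < a1"
      unfolding x_def using w a1_pos by auto
    have "frac (e + (w + x)) = frac (frac (e + w) + x)"
      by (simp add: add.assoc)
    also have "\<dots> = x"
      unfolding zero using x a1_less_a2 a2_less_1 by (simp add: frac_eq)
    finally show False
      using avoid[of "w + x"] x w by auto
  qed
  obtain n :: int where n: "\<And>w. lo < w \<Longrightarrow> w < hi \<Longrightarrow> frac (e + w) = e + w - n"
    using frac_affine_on_interval[of lo hi e] nonzero by blast
  have "a1 < frac (e + w)" if w: "lo < w" "w < hi" for w
  proof (rule ccontr)
    assume "\<not> a1 < frac (e + w)"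
    then have "frac (e + w) = a1"
      using avoid[OF w] nonzero[OF w] frac_ge_0[of "e + w"] by auto
    define x where "x = min (w - lo) a1 / 2"
    have x: "0 < x" "x < w - lo" "x < a1"
      unfolding x_def using w a1_pos by auto
    then have "frac (e + (w - x)) = a1 - x"
      using n[of "w - x"] n[OF w] \<open>frac (e + w) = a1\<close> w by simp
    then show False
      using avoid[of "w - x"] x w by auto
  qed
  then show thesis
    using that n by blast
qed

lemma arc_in_I2_or_I3:
  assumes avoid: "\<And>w. lo < w \<Longrightarrow> w < hi \<Longrightarrow> frac (e + w) \<notin> {0<..<a1} \<and> frac (e + w) \<noteq> a2"
  shows "(\<forall>w. lo < w \<longrightarrow> w < hi \<longrightarrow> a1 < frac (e + w) \<and> frac (e + w) < a2)
       \<or> (\<forall>w. lo < w \<longrightarrow> w < hi \<longrightarrow> a2 < frac (e + w))"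
proof -
  obtain n :: int where n:
    "\<And>w. lo < w \<Longrightarrow> w < hi \<Longrightarrow> a1 < frac (e + w) \<and> frac (e + w) = e + w - of_int n"
    using arc_avoiding_I1 avoid by blast
  have one_side: "a2 < frac (e + w)"
    if w: "lo < w" "w < hi" and q: "lo < q" "q < hi" "a2 < frac (e + q)" for w q
  proof (rule ccontr)
    assume "\<not> a2 < frac (e + w)"
    then have "frac (e + w) < a2"
      using avoid[OF w] by auto
    define z where "z = of_int n + a2 - e"
    have "lo < z" "z < hi" "frac (e + z) = a2"
      using n[OF w] n[OF q(1,2)] \<open>frac (e + w) < a2\<close> q(3) w q a1_pos a1_less_a2 a2_less_1
      unfolding z_def by (auto simp: frac_eq)
    then show False
      using avoid by blast
  qed
  show ?thesis
    using n avoid one_side by (meson linorder_neqE_linordered_idom)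
qed

lemma T_translates_arc:
  assumes "\<And>w. lo < w \<Longrightarrow> w < hi \<Longrightarrow> frac (e + w) \<notin> {0<..<a1} \<and> frac (e + w) \<noteq> a2"
  obtains s where "\<And>w. lo < w \<Longrightarrow> w < hi \<Longrightarrow> frac (e + w) \<in> Dom \<and> T (frac (e + w)) = frac (e + s + w)"
  using arc_in_I2_or_I3[OF assms]
proof
  assume I2: "\<forall>w. lo < w \<longrightarrow> w < hi \<longrightarrow> a1 < frac (e + w) \<and> frac (e + w) < a2"
  show thesis
  proof (rule that)
    fix w
    assume "lo < w" "w < hi"
    with I2 have "a1 < frac (e + w)" "frac (e + w) < a2"
      by auto
    then show "frac (e + w) \<in> Dom \<and> T (frac (e + w)) = frac (e + (c - a1 - a2) + w)"
      using T_frac_I2 a1_pos frac_lt_1[of "e + w"]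
      by (simp add: mem_Dom algebra_simps del: frac_gt_0_iff)
  qed
next
  assume I3: "\<forall>w. lo < w \<longrightarrow> w < hi \<longrightarrow> a2 < frac (e + w)"
  show thesis
  proof (rule that)
    fix w
    assume "lo < w" "w < hi"
    with I3 have "a2 < frac (e + w)"
      by auto
    then show "frac (e + w) \<in> Dom \<and> T (frac (e + w)) = frac (e + (c - a2) + w)"
      using T_frac_I3 a1_pos a1_less_a2 frac_lt_1[of "e + w"]
      by (simp add: mem_Dom algebra_simps del: frac_gt_0_iff)
  qed
qed

text \<open>\<open>T\<^sup>k\<close> maps \<open>p w\<close> to the point \<open>E + w\<close> of the circle for \<open>lo < w < hi\<close>: the parameter
  \<open>w\<close> absorbs the flip of \<open>I1\<close>, so rigid motions of image arcs become shifts of \<open>E\<close>.\<close>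

definition orbit_arc :: "nat \<Rightarrow> (real \<Rightarrow> real) \<Rightarrow> real \<Rightarrow> real \<Rightarrow> real \<Rightarrow> bool" where
  "orbit_arc k p E lo hi \<longleftrightarrow>
     (\<forall>w. lo < w \<longrightarrow> w < hi \<longrightarrow> p w \<in> iter_dom Dom T k \<and> (T ^^ k) (p w) = frac (E + w))"

lemma orbit_arcD:
  "orbit_arc k p E lo hi \<Longrightarrow> lo < w \<Longrightarrow> w < hi \<Longrightarrow>
    p w \<in> iter_dom Dom T k \<and> (T ^^ k) (p w) = frac (E + w)"
  unfolding orbit_arc_def by blast

lemma orbit_arc_mono:
  "orbit_arc k p E lo hi \<Longrightarrow> lo \<le> lo' \<Longrightarrow> hi' \<le> hi \<Longrightarrow> orbit_arc k p E lo' hi'"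
  unfolding orbit_arc_def by auto

lemma orbit_arc_Suc:
  assumes "orbit_arc k p E lo hi"
    and "\<And>w. lo < w \<Longrightarrow> w < hi \<Longrightarrow> frac (E + w) \<in> Dom \<and> T (frac (E + w)) = frac (E + s + w)"
  shows "orbit_arc (Suc k) p (E + s) lo hi"
  using assms unfolding orbit_arc_def by (simp add: iter_dom_Suc)

end

locale first_return_split = one_flip_cet3 +
  fixes N n0 :: nat and d :: real
  assumes inj: "inj_on T Dom"
    and first_return: "\<And>n. 1 \<le> n \<Longrightarrow> n < N \<Longrightarrow> iter_img Dom T n {0<..<a1} \<inter> {0<..<a1} = {}"
    and n0: "1 \<le> n0" "n0 < N"
    and d: "0 < d" "d < a1" "d \<in> iter_dom Dom T n0" "(T ^^ n0) d = a2"
begin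

lemma iterate_I1_notin_I1:
  assumes "0 < t" "t < a1" "t \<in> iter_dom Dom T k" "1 \<le> k" "k < N"
  shows "(T ^^ k) t \<notin> {0<..<a1}"
proof -
  have "(T ^^ k) t \<in> iter_img Dom T k {0<..<a1}"
    unfolding iter_img_def using assms(1-3) by simp
  then show ?thesis
    using first_return[OF assms(4,5)] by blast
qed

lemma iterates_I1_eq_le:
  assumes le: "k \<le> k'" and t: "0 < t" "t < a1" "t \<in> iter_dom Dom T k"
    and t': "0 < t'" "t' < a1" "t' \<in> iter_dom Dom T k'" "k' < N"
    and eq: "(T ^^ k) t = (T ^^ k') t'"
  shows "k = k' \<and> t = t'"
proof -
  obtain r where r: "k' = r + k"
    using le by (metis add.commute le_iff_add)
  have "(T ^^ r) t' \<in> iter_dom Dom T k"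
    using funpow_in_iter_dom t'(3) unfolding r .
  moreover have "(T ^^ k) t = (T ^^ k) ((T ^^ r) t')"
    using eq unfolding r by (simp add: add.commute[of r k] funpow_add)
  ultimately have t_eq: "t = (T ^^ r) t'"
    using inj_onD[OF inj_on_funpow_iter_dom[OF inj]] t(3) by simp
  have "r = 0"
  proof (rule ccontr)
    assume "r \<noteq> 0"
    then have "1 \<le> r" "r < N"
      using r t'(4) by auto
    have "t' \<in> iter_dom Dom T r"
      using iter_dom_mono[of r k' t'] t'(3) r by simp
    then have "t \<in> iter_img Dom T r {0<..<a1} \<inter> {0<..<a1}"
      unfolding iter_img_def using t_eq t'(1,2) t(1,2) by auto
    then show False
      using first_return[OF \<open>1 \<le> r\<close> \<open>r < N\<close>] by simp
  qed
  then show ?thesis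
    using r t_eq by simp
qed

lemma iterates_I1_eq:
  assumes t: "0 < t" "t < a1" "t \<in> iter_dom Dom T k" "k < N"
    and t': "0 < t'" "t' < a1" "t' \<in> iter_dom Dom T k'" "k' < N"
    and eq: "(T ^^ k) t = (T ^^ k') t'"
  shows "k = k' \<and> t = t'"
proof (cases "k \<le> k'")
  case True
  show ?thesis
    using iterates_I1_eq_le[OF True t(1-3) t' eq] .
next
  case False
  then show ?thesis
    using iterates_I1_eq_le[OF _ t'(1-3) t eq[symmetric]] by auto
qed

lemma iterate_I1_eq_a2:
  assumes "0 < t" "t < a1" "t \<in> iter_dom Dom T k" "k < N" "(T ^^ k) t = a2"
  shows "k = n0 \<and> t = d"
proof -
  have "(T ^^ k) t = (T ^^ n0) d"
    using assms(5) d(4) by simp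
  then show ?thesis
    using iterates_I1_eq[OF assms(1-4) d(1-3) n0(2)] by blast
qed

lemma orbit_arc_avoids:
  assumes "orbit_arc k p E lo hi" "lo < w" "w < hi" "p w \<in> {0<..<a1}" "1 \<le> k" "k < N"
    and "k \<noteq> n0 \<or> p w \<noteq> d"
  shows "frac (E + w) \<notin> {0<..<a1} \<and> frac (E + w) \<noteq> a2"
proof -
  have dom: "p w \<in> iter_dom Dom T k" and eq: "(T ^^ k) (p w) = frac (E + w)"
    using orbit_arcD[OF assms(1-3)] by auto
  have t: "0 < p w" "p w < a1"
    using assms(4) by auto
  have "(T ^^ k) (p w) \<notin> {0<..<a1}"
    using iterate_I1_notin_I1[OF t dom assms(5,6)] .
  moreover have "(T ^^ k) (p w) \<noteq> a2"
    using iterate_I1_eq_a2[OF t dom assms(6)] assms(7) by blast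
  ultimately show ?thesis
    using eq by simp
qed

lemma orbit_I1_before_split:
  assumes "1 \<le> k" "k \<le> n0"
  shows "\<exists>G. orbit_arc k uminus G (-a1) 0"
  using assms
proof (induction k)
  case 0
  then show ?case by simp
next
  case (Suc k)
  show ?case
  proof (cases "k = 0")
    case True
    have "orbit_arc 1 uminus c (-a1) 0"
      unfolding orbit_arc_def using T_I1 a1_less_a2 a2_less_1 by (auto simp: iter_dom_def mem_Dom)
    then show ?thesis
      using True by auto
  next
    case False
    then obtain G where G: "orbit_arc k uminus G (-a1) 0"
      using Suc by auto
    have avoid: "frac (G + w) \<notin> {0<..<a1} \<and> frac (G + w) \<noteq> a2" if "-a1 < w" "w < 0" for w
      using orbit_arc_avoids[OF G that] False Suc.prems n0 that by auto
    obtain s where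
      "\<And>w. -a1 < w \<Longrightarrow> w < 0 \<Longrightarrow> frac (G + w) \<in> Dom \<and> T (frac (G + w)) = frac (G + s + w)"
      using T_translates_arc[OF avoid] by blast
    then show ?thesis
      using orbit_arc_Suc[OF G] by blast
  qed
qed

lemma orbit_arc_at_split: "orbit_arc n0 (\<lambda>y. d - y) a2 (d - a1) d"
proof -
  obtain G where G: "orbit_arc n0 uminus G (-a1) 0"
    using orbit_I1_before_split n0 by auto
  have split: "frac (G - d) = a2"
    using orbit_arcD[OF G, of "- d"] d(1,2,4) by simp
  show ?thesis
    unfolding orbit_arc_def
  proof (intro allI impI)
    fix y
    assume "d - a1 < y" "y < d"
    then have "d - y \<in> iter_dom Dom T n0 \<and> (T ^^ n0) (d - y) = frac (G + (y - d))"
      using orbit_arcD[OF G, of "y - d"] by simp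
    moreover have "frac (G + (y - d)) = frac (frac (G - d) + y)"
      by (simp add: algebra_simps)
    ultimately show "d - y \<in> iter_dom Dom T n0 \<and> (T ^^ n0) (d - y) = frac (a2 + y)"
      using split by simp
  qed
qed

lemma orbit_arc_left_end_notin_I1:
  assumes arc: "orbit_arc k p E (-L) 0" and "0 < L"
    and I1: "p ` {-L<..<0} \<subseteq> {0<..<a1}" and k: "1 \<le> k" "k < N"
  shows "frac E \<notin> {0<..<a1}"
proof
  assume E: "frac E \<in> {0<..<a1}"
  define y where "y = min (frac E) L / 2"
  have y: "0 < y" "y < frac E" "y < L"
    unfolding y_def using E \<open>0 < L\<close> by (auto simp del: frac_gt_0_iff)
  have py: "0 < p (- y)" "p (- y) < a1" "p (- y) \<in> iter_dom Dom T k"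
    and image: "(T ^^ k) (p (- y)) = frac (E + - y)"
    using I1 y orbit_arcD[OF arc, of "- y"] by (auto simp: image_subset_iff)
  have "frac (E + - y) = frac (frac E + - y)"
    by (simp only: frac_add_simps(1))
  also have "\<dots> = frac E - y"
    using y frac_lt_1[of E] by (simp add: frac_eq)
  finally have "(T ^^ k) (p (- y)) \<in> {0<..<a1}"
    using image y E by auto
  then show False
    using iterate_I1_notin_I1[OF py k] by blast
qed

lemma orbit_arc_right_end_ne_a2:
  assumes arc: "orbit_arc k p E 0 L" and "0 < L"
    and I1: "p ` {0<..<L} \<subseteq> {0<..<a1}" and "k < N"
    and not_split: "k \<noteq> n0 \<or> (\<forall>y. p y \<noteq> d - y)"
  shows "frac E \<noteq> a2"
proof
  assume E: "frac E = a2"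
  define y where "y = min L d / 2"
  have y: "0 < y" "y < L" "y < d"
    unfolding y_def using \<open>0 < L\<close> d(1) by auto
  have py: "0 < p y" "p y < a1" "p y \<in> iter_dom Dom T k" "(T ^^ k) (p y) = frac (E + y)"
    using I1 y orbit_arcD[OF arc, of y] by (auto simp: image_subset_iff)
  have dy: "0 < d - y" "d - y < a1" "d - y \<in> iter_dom Dom T n0" "(T ^^ n0) (d - y) = frac (a2 + y)"
    using y d(2) orbit_arcD[OF orbit_arc_at_split, of y] by auto
  have "frac (E + y) = frac (a2 + y)"
    using E frac_add_simps(1)[of E y] by simp
  then have "k = n0 \<and> p y = d - y"
    using iterates_I1_eq[OF py(1-3) \<open>k < N\<close> dy(1-3) n0(2)] py(4) dy(4) by simp
  then show False
    using not_split by blast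
qed

text \<open>Two image arcs glued at \<open>E\<close> stay glued before the first return: the common endpoint
  can land neither in \<open>I1\<close> (its left neighbours would) nor on \<open>a2\<close> (its right neighbours would
  then be the image of \<open>I\<^sub>l\<close> at time \<open>n0\<close>), so one translation moves both arcs.\<close>

lemma orbit_arc_pair_continue:
  assumes "0 < L"
    and arc1: "orbit_arc k1 p1 E (-L) 0" and arc2: "orbit_arc k2 p2 E 0 L"
    and I1: "p1 ` {-L<..<0} \<subseteq> {0<..<a1} - {d}" "p2 ` {0<..<L} \<subseteq> {0<..<a1} - {d}"
    and k: "1 \<le> k1" "1 \<le> k2"
    and not_split: "n0 < k2 \<or> (\<forall>y. p2 y \<noteq> d - y)"
  shows "k1 + M \<le> N \<Longrightarrow> k2 + M \<le> N \<Longrightarrow>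
    \<exists>E'. orbit_arc (k1 + M) p1 E' (-L) 0 \<and> orbit_arc (k2 + M) p2 E' 0 L"
proof (induction M)
  case 0
  then show ?case
    using arc1 arc2 by auto
next
  case (Suc M)
  then obtain E' where arcs: "orbit_arc (k1 + M) p1 E' (-L) 0" "orbit_arc (k2 + M) p2 E' 0 L"
    by auto
  have times: "1 \<le> k1 + M" "k1 + M < N" "1 \<le> k2 + M" "k2 + M < N"
    using Suc.prems k by auto
  have avoid: "frac (E' + w) \<notin> {0<..<a1} \<and> frac (E' + w) \<noteq> a2" if "-L < w" "w < L" for w
  proof (cases w "0 :: real" rule: linorder_cases)
    case less
    then have "p1 w \<in> {0<..<a1}" "p1 w \<noteq> d"
      using I1(1) that by (auto simp: image_subset_iff)
    then show ?thesis
      using orbit_arc_avoids[OF arcs(1) that(1) less] times(1,2) by blast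
  next
    case equal
    have "frac E' \<notin> {0<..<a1}"
      using orbit_arc_left_end_notin_I1[OF arcs(1) \<open>0 < L\<close>] I1(1) times(1,2) by auto
    moreover have "frac E' \<noteq> a2"
      using orbit_arc_right_end_ne_a2[OF arcs(2) \<open>0 < L\<close>] I1(2) times(4) not_split by auto
    ultimately show ?thesis
      using equal by simp
  next
    case greater
    then have "p2 w \<in> {0<..<a1}" "p2 w \<noteq> d"
      using I1(2) that by (auto simp: image_subset_iff)
    then show ?thesis
      using orbit_arc_avoids[OF arcs(2) greater that(2)] times(3,4) by blast
  qed
  obtain s where s:
    "\<And>w. -L < w \<Longrightarrow> w < L \<Longrightarrow> frac (E' + w) \<in> Dom \<and> T (frac (E' + w)) = frac (E' + s + w)"
    using T_translates_arc[OF avoid] by blast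
  have "orbit_arc (Suc (k1 + M)) p1 (E' + s) (-L) 0" "orbit_arc (Suc (k2 + M)) p2 (E' + s) 0 L"
    using orbit_arc_Suc[OF arcs(1), of s] orbit_arc_Suc[OF arcs(2), of s] s \<open>0 < L\<close> by auto
  then show ?case
    by auto
qed

text \<open>One step after the cut the two sides of \<open>d\<close> are reattached: \<open>T\<^bsup>n0+1\<^esup>\<close> puts
  the left side of \<open>d\<close> right after \<open>T(I\<^sub>l)\<close>, which ends at \<open>c\<close>, and the right side of
  \<open>d\<close> right before \<open>T(I\<^sub>r)\<close>, which starts at \<open>c - a1\<close>.\<close>

lemma orbit_arc_after_split_left: "orbit_arc (Suc n0) (\<lambda>w. d - w) c 0 d"
proof -
  have split: "orbit_arc n0 (\<lambda>w. d - w) a2 0 d"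
    using orbit_arc_mono[OF orbit_arc_at_split] d(2) by simp
  have avoid: "frac (a2 + w) \<notin> {0<..<a1} \<and> frac (a2 + w) \<noteq> a2" if "0 < w" "w < d" for w
  proof -
    have "d - w \<in> {0<..<a1}" "d - w \<noteq> d"
      using that d(2) by auto
    then show ?thesis
      using orbit_arc_avoids[OF split that _ n0] by simp
  qed
  have in_I3: "a2 < frac (a2 + w)" if "0 < w" "w < d" for w
  proof -
    define y where "y = min d (1 - a2) / 2"
    have y: "0 < y" "y < d" "y < 1 - a2"
      unfolding y_def using d(1) a2_less_1 by auto
    then have "frac (a2 + y) = a2 + y"
      using a1_pos a1_less_a2 by (simp add: frac_eq)
    with y have "0 < y" "y < d" "a2 < frac (a2 + y)"
      by auto
    then show ?thesis
      using arc_in_I2_or_I3[OF avoid] that by fastforce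
  qed
  have "orbit_arc (Suc n0) (\<lambda>w. d - w) (a2 + (c - a2)) 0 d"
  proof (rule orbit_arc_Suc[OF split])
    fix w
    assume "0 < w" "w < d"
    then have "a2 < frac (a2 + w)"
      by (rule in_I3)
    then show "frac (a2 + w) \<in> Dom \<and> T (frac (a2 + w)) = frac (a2 + (c - a2) + w)"
      using T_frac_I3 a1_pos a1_less_a2 frac_lt_1[of "a2 + w"]
      by (simp add: mem_Dom add.commute del: frac_gt_0_iff)
  qed
  then show ?thesis
    by simp
qed

lemma orbit_arc_after_split_right: "orbit_arc (Suc n0) (\<lambda>w. d - w) (c - a1) (d - a1) 0"
proof -
  have split: "orbit_arc n0 (\<lambda>w. d - w) a2 (d - a1) 0"
    using orbit_arc_mono[OF orbit_arc_at_split] d(1) by simp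
  have avoid: "frac (a2 + w) \<notin> {0<..<a1} \<and> frac (a2 + w) \<noteq> a2" if "d - a1 < w" "w < 0" for w
  proof -
    have "d - w \<in> {0<..<a1}" "d - w \<noteq> d"
      using that d(1) by auto
    then show ?thesis
      using orbit_arc_avoids[OF split that _ n0] by simp
  qed
  have in_I2: "a1 < frac (a2 + w) \<and> frac (a2 + w) < a2" if "d - a1 < w" "w < 0" for w
  proof -
    define m where "m = min (a1 - d) a2"
    have "0 < m" "m \<le> a1 - d" "m \<le> a2"
      unfolding m_def using d(2) a1_pos a1_less_a2 by auto
    define y where "y = - m / 2"
    have y: "d - a1 < y" "y < 0" "- a2 < y"
      unfolding y_def using \<open>0 < m\<close> \<open>m \<le> a1 - d\<close> \<open>m \<le> a2\<close> by linarith+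
    then have "frac (a2 + y) = a2 + y"
      using a2_less_1 by (simp add: frac_eq)
    with y have "d - a1 < y" "y < 0" "frac (a2 + y) < a2"
      by auto
    then show ?thesis
      using arc_in_I2_or_I3[OF avoid] that by fastforce
  qed
  have "orbit_arc (Suc n0) (\<lambda>w. d - w) (a2 + (c - a1 - a2)) (d - a1) 0"
  proof (rule orbit_arc_Suc[OF split])
    fix w
    assume "d - a1 < w" "w < 0"
    then have "a1 < frac (a2 + w)" "frac (a2 + w) < a2"
      using in_I2 by blast+
    then show "frac (a2 + w) \<in> Dom \<and> T (frac (a2 + w)) = frac (a2 + (c - a1 - a2) + w)"
      using T_frac_I2 a1_pos frac_lt_1[of "a2 + w"]
      by (simp add: mem_Dom add.commute del: frac_gt_0_iff)
  qed
  then show ?thesis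
    by simp
qed

lemma left_half_iterates:
  obtains u where "0 \<le> u" "u < 1"
    "\<And>t. 0 < t \<Longrightarrow> t < d \<Longrightarrow> t \<in> iter_dom Dom T (N - n0) \<and> (T ^^ (N - n0)) t = frac (u - t)"
    "\<And>t. 0 < t \<Longrightarrow> t < d \<Longrightarrow> t \<in> iter_dom Dom T N \<and> (T ^^ N) t = frac (u + d - t)"
proof -
  have start: "orbit_arc 1 uminus c (-d) 0"
    unfolding orbit_arc_def using T_I1 d(1,2) a1_less_a2 a2_less_1 by (auto simp: iter_dom_def mem_Dom)
  have "\<exists>E. orbit_arc (1 + (N - n0 - 1)) uminus E (-d) 0 \<and>
      orbit_arc (Suc n0 + (N - n0 - 1)) (\<lambda>w. d - w) E 0 d"
    by (rule orbit_arc_pair_continue[OF d(1) start orbit_arc_after_split_left]) (use d(1,2) n0 in auto)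
  moreover have "1 + (N - n0 - 1) = N - n0" "Suc n0 + (N - n0 - 1) = N"
    using n0 by auto
  ultimately obtain E where E: "orbit_arc (N - n0) uminus E (-d) 0" "orbit_arc N (\<lambda>w. d - w) E 0 d"
    by auto
  have frac_E: "frac (E + z) = frac (frac E + z)" for z
    by simp
  show thesis
  proof (rule that[of "frac E"])
    fix t
    assume "0 < t" "t < d"
    then show "t \<in> iter_dom Dom T (N - n0) \<and> (T ^^ (N - n0)) t = frac (frac E - t)"
      using orbit_arcD[OF E(1), of "- t"] frac_E[of "- t"] by simp
  next
    fix t
    assume "0 < t" "t < d"
    then show "t \<in> iter_dom Dom T N \<and> (T ^^ N) t = frac (frac E + d - t)"
      using orbit_arcD[OF E(2), of "d - t"] frac_E[of "d - t"] by (simp add: add_diff_eq)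
  qed (simp_all add: frac_lt_1)
qed

lemma right_half_iterates:
  obtains v where "0 \<le> v" "v < 1"
    "\<And>t. d < t \<Longrightarrow> t < a1 \<Longrightarrow> t \<in> iter_dom Dom T (N - n0) \<and> (T ^^ (N - n0)) t = frac (v + a1 - t)"
    "\<And>t. d < t \<Longrightarrow> t < a1 \<Longrightarrow> t \<in> iter_dom Dom T N \<and> (T ^^ N) t = frac (v + d - t)"
proof -
  have start: "orbit_arc 1 (\<lambda>w. a1 - w) (c - a1) 0 (a1 - d)"
    unfolding orbit_arc_def using T_I1 d(1,2) a1_less_a2 a2_less_1
    by (auto simp: iter_dom_def mem_Dom algebra_simps)
  have "\<exists>E. orbit_arc (Suc n0 + (N - n0 - 1)) (\<lambda>w. d - w) E (- (a1 - d)) 0 \<and>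
      orbit_arc (1 + (N - n0 - 1)) (\<lambda>w. a1 - w) E 0 (a1 - d)"
    by (rule orbit_arc_pair_continue[OF _ _ start]) (use orbit_arc_after_split_right d(1,2) n0 in auto)
  moreover have "1 + (N - n0 - 1) = N - n0" "Suc n0 + (N - n0 - 1) = N"
    using n0 by auto
  ultimately obtain E where
    E: "orbit_arc N (\<lambda>w. d - w) E (d - a1) 0" "orbit_arc (N - n0) (\<lambda>w. a1 - w) E 0 (a1 - d)"
    by auto
  have frac_E: "frac (E + z) = frac (frac E + z)" for z
    by simp
  show thesis
  proof (rule that[of "frac E"])
    fix t
    assume "d < t" "t < a1"
    then show "t \<in> iter_dom Dom T (N - n0) \<and> (T ^^ (N - n0)) t = frac (frac E + a1 - t)"
      using orbit_arcD[OF E(2), of "a1 - t"] frac_E[of "a1 - t"] by (simp add: add_diff_eq)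
  next
    fix t
    assume "d < t" "t < a1"
    then show "t \<in> iter_dom Dom T N \<and> (T ^^ N) t = frac (frac E + d - t)"
      using orbit_arcD[OF E(1), of "d - t"] frac_E[of "d - t"] by (simp add: add_diff_eq)
  qed (simp_all add: frac_lt_1)
qed

lemma left_half_iterates_aperiodic:
  assumes aper: "\<not> has_periodic_point Dom T"
  obtains u where "a1 \<le> u" "u < 1"
    "\<And>t. 0 < t \<Longrightarrow> t < d \<Longrightarrow> t \<in> iter_dom Dom T N \<and> (T ^^ N) t = frac (u + d - t)"
proof -
  obtain u where u: "0 \<le> u" "u < 1"
    and early: "\<And>t. 0 < t \<Longrightarrow> t < d \<Longrightarrow>
      t \<in> iter_dom Dom T (N - n0) \<and> (T ^^ (N - n0)) t = frac (u - t)"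
    and late: "\<And>t. 0 < t \<Longrightarrow> t < d \<Longrightarrow> t \<in> iter_dom Dom T N \<and> (T ^^ N) t = frac (u + d - t)"
    using left_half_iterates by blast
  have "\<not> (0 < u \<and> u < a1)"
  proof
    assume "0 < u \<and> u < a1"
    define t where "t = min u d / 2"
    have t: "0 < t" "t < u" "t < d"
      unfolding t_def using \<open>0 < u \<and> u < a1\<close> d(1) by auto
    then have "(T ^^ (N - n0)) t \<in> {0<..<a1}"
      using early[OF t(1,3)] u \<open>0 < u \<and> u < a1\<close> by (simp add: frac_eq)
    moreover have "1 \<le> N - n0" "N - n0 < N"
      using n0 by auto
    ultimately show False
      using iterate_I1_notin_I1[of t "N - n0"] early[OF t(1,3)] t d(2) by auto
  qed
  moreover have "u \<noteq> 0"
  proof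
    assume "u = 0"
    then have "(T ^^ N) (d / 2) = d / 2"
      using late[of "d / 2"] d(1,2) a1_less_a2 a2_less_1 by (simp add: frac_eq)
    then have "has_periodic_point Dom T"
      unfolding has_periodic_point_def using late[of "d / 2"] d(1) n0
      by (intro exI[of _ "d / 2"] exI[of _ N]) auto
    with aper show False
      by contradiction
  qed
  ultimately show thesis
    using that[of u] u late by force
qed

lemma right_half_iterates_aperiodic:
  assumes aper: "\<not> has_periodic_point Dom T"
  obtains v where "a1 < v" "v < 1"
    "\<And>t. d < t \<Longrightarrow> t < a1 \<Longrightarrow> t \<in> iter_dom Dom T N \<and> (T ^^ N) t = frac (v + d - t)"
proof -
  obtain v where v: "0 \<le> v" "v < 1"
    and early: "\<And>t. d < t \<Longrightarrow> t < a1 \<Longrightarrow>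
      t \<in> iter_dom Dom T (N - n0) \<and> (T ^^ (N - n0)) t = frac (v + a1 - t)"
    and late: "\<And>t. d < t \<Longrightarrow> t < a1 \<Longrightarrow> t \<in> iter_dom Dom T N \<and> (T ^^ N) t = frac (v + d - t)"
    using right_half_iterates by blast
  have "\<not> v < a1"
  proof
    assume "v < a1"
    define e where "e = min (a1 - v) (a1 - d) / 2"
    have e: "0 < e" "e < a1 - v" "e < a1 - d"
      unfolding e_def using \<open>v < a1\<close> d(2) by auto
    then have "(T ^^ (N - n0)) (a1 - e) \<in> {0<..<a1}"
      using early[of "a1 - e"] v a1_less_a2 a2_less_1 by (simp add: frac_eq)
    moreover have "1 \<le> N - n0" "N - n0 < N"
      using n0 by auto
    ultimately show False
      using iterate_I1_notin_I1[of "a1 - e" "N - n0"] early[of "a1 - e"] e d(1) by auto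
  qed
  moreover have "v \<noteq> a1"
  proof
    assume "v = a1"
    define p where "p = (a1 + d) / 2"
    have p: "d < p" "p < a1"
      unfolding p_def using d(2) by auto
    have "v + d - p = p"
      unfolding p_def using \<open>v = a1\<close> by (simp add: field_simps)
    moreover have "frac p = p"
      using p d(1) a1_less_a2 a2_less_1 by (simp add: frac_eq)
    ultimately have "(T ^^ N) p = p"
      using late[OF p] by simp
    then have "has_periodic_point Dom T"
      unfolding has_periodic_point_def using late[OF p] n0
      by (intro exI[of _ p] exI[of _ N]) auto
    with aper show False
      by contradiction
  qed
  ultimately show thesis
    using that[of v] v late by force
qed

lemma left_return_hits_0:
  assumes aper: "\<not> has_periodic_point Dom T"
    and x: "0 < x" "x < d" "x \<in> iter_dom Dom T N" "(T ^^ N) x \<in> {0<..<a1}"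
  shows "0 \<in> iter_img Dom T N {0<..<d}"
proof -
  obtain u where u: "a1 \<le> u" "u < 1"
    and late: "\<And>t. 0 < t \<Longrightarrow> t < d \<Longrightarrow> t \<in> iter_dom Dom T N \<and> (T ^^ N) t = frac (u + d - t)"
    using left_half_iterates_aperiodic[OF aper] by blast
  have "1 \<le> u + d - x"
  proof (rule ccontr)
    assume "\<not> 1 \<le> u + d - x"
    then have "(T ^^ N) x = u + d - x"
      using late[OF x(1,2)] u a1_pos x(2) by (simp add: frac_eq)
    then show False
      using x(2,4) u by simp
  qed
  then have "(T ^^ N) x = u + d - x - 1"
    using late[OF x(1,2)] u x(1,2) d(2) a1_less_a2 a2_less_1 by (simp add: frac_unique_iff)
  define t0 where "t0 = u + d - 1"
  have t0: "0 < t0" "t0 < d"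
    using \<open>(T ^^ N) x = u + d - x - 1\<close> x(1,4) u unfolding t0_def by auto
  have "(T ^^ N) t0 = 0"
    using late[OF t0] unfolding t0_def by simp
  then show ?thesis
    unfolding iter_img_def using late[OF t0] t0 by (intro image_eqI[of _ _ t0]) auto
qed

lemma right_return_hits_a1:
  assumes aper: "\<not> has_periodic_point Dom T"
    and x: "d < x" "x < a1" "x \<in> iter_dom Dom T N" "(T ^^ N) x \<in> {0<..<a1}"
  shows "a1 \<in> iter_img Dom T N {d<..<a1}"
proof -
  obtain v where v: "a1 < v" "v < 1"
    and late: "\<And>t. d < t \<Longrightarrow> t < a1 \<Longrightarrow> t \<in> iter_dom Dom T N \<and> (T ^^ N) t = frac (v + d - t)"
    using right_half_iterates_aperiodic[OF aper] by blast
  have "(T ^^ N) x = v + d - x"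
    using late[OF x(1,2)] v x(1,2) d(1) by (simp add: frac_eq)
  define t0 where "t0 = v + d - a1"
  have t0: "d < t0" "t0 < a1"
    using \<open>(T ^^ N) x = v + d - x\<close> x(2,4) v unfolding t0_def by auto
  have "(T ^^ N) t0 = a1"
    using late[OF t0] a1_pos a1_less_a2 a2_less_1 unfolding t0_def by (simp add: frac_eq)
  then show ?thesis
    unfolding iter_img_def using late[OF t0] t0 by (intro image_eqI[of _ _ t0]) auto
qed

end

theorem lemma3p4:
  fixes a1 a2 d :: real and T :: "real \<Rightarrow> real" and N n0 :: nat
  assumes cet: "CET3 a1 a2 T"
    and flip1: "flip_on T {0<..<a1}"
    and noflip2: "\<not> flip_on T {a1<..<a2}"
    and noflip3: "\<not> flip_on T {a2<..<1}"
    and order: "cyc_sets (T ` {0<..<a1}) (T ` {a2<..<1}) (T ` {a1<..<a2})"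
    and aper: "\<not> has_periodic_point (cet_dom a1 a2) T"
    and N2: "N \<ge> 2"
    and Nhit: "iter_img (cet_dom a1 a2) T N {0<..<a1} \<inter> {0<..<a1} \<noteq> {}"
    and Nleast: "\<And>n. 1 \<le> n \<Longrightarrow> n < N \<Longrightarrow>
                   iter_img (cet_dom a1 a2) T n {0<..<a1} \<inter> {0<..<a1} = {}"
    and n0: "1 \<le> n0" "n0 \<le> N - 1"
    and d: "d \<in> {0<..<a1}" "d \<in> iter_dom (cet_dom a1 a2) T n0" "(T ^^ n0) d = a2"
  shows "0 \<in> iter_img (cet_dom a1 a2) T N {0<..<d} \<or>
         a1 \<in> iter_img (cet_dom a1 a2) T N {d<..<a1}"
proof -
  obtain c where T: "\<And>x. 0 < x \<Longrightarrow> x < a1 \<Longrightarrow> T x = frac (c - x)"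
    "\<And>x. a1 < x \<Longrightarrow> x < a2 \<Longrightarrow> T x = frac (x + c - a1 - a2)"
    "\<And>x. a2 < x \<Longrightarrow> x < 1 \<Longrightarrow> T x = frac (x + c - a2)"
    using one_flip_normal_form[OF cet flip1 noflip2 noflip3 order] by blast
  interpret return: first_return_split a1 a2 c T N n0 d
    using cet T Nleast n0 N2 d unfolding CET3_def by unfold_locales auto
  obtain x where x: "0 < x" "x < a1" "x \<in> iter_dom (cet_dom a1 a2) T N"
    "(T ^^ N) x \<in> {0<..<a1}"
    using Nhit unfolding iter_img_def by fastforce
  have "x \<noteq> d"
  proof
    assume "x = d"
    then have "(T ^^ n0) d \<in> cet_dom a1 a2"
      using x(3) n0 N2 unfolding iter_dom_def by auto
    then show False
      using d(3) by (simp add: return.mem_Dom)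
  qed
  then consider "x < d" | "d < x"
    by linarith
  then show ?thesis
    using return.left_return_hits_0[OF aper] return.right_return_hits_a1[OF aper] x by cases auto
qed

end
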